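(* If $\|W\|_2^2\le B_W^2$ and $0\le u_i\le B_u$ for all $i$, then the 2-norm of the gradient of $f$ and of each stochastic gradient $\nabla f_{ik}$ is bounded by $$B_f=N\max\{1,e^{B_u}-1\}+2\big(Ne^{B_u}B_x+\mu\max_k\{\beta_k\}B_W\big).$$
   Context: Data: $(y_i,x_i)$, $i=1,\dots,N$, $x_i\in\mathbb{R}^D$, $y_i\in\{1,\dots,K\}$, $K\ge2$; $\mu>0$; $u\in\mathbb{R}^N$, $W=[w_1,\dots,w_K]\in\mathbb{R}^{D\times K}$ with Frobenius norm $\|W\|_2$. Let $n_j=|\{i:y_i=j\}|$, $\beta_j=\frac{N}{n_j+(N-n_j)/(K-1)}$, and for $k\ne y_i$ $$f_{ik}(u,W)=N\big(u_i+e^{-u_i}+(K-1)e^{x_i^\top(w_k-w_{y_i})-u_i}\big)+\tfrac{\mu}{2}\big(\beta_{y_i}\|w_{y_i}\|_2^2+\beta_k\|w_k\|_2^2\big),$$ and $f=\mathbb{E}_{ik}[f_{ik}]$ with $i$ uniform on $\{1,\dots,N\}$ and $k$ uniform on $\{1,\dots,K\}\setminus\{y_i\}$. $B_W^2=\frac{2}{\mu}N\log K$, $B_x=\max_i\|x_i\|_2$, $B_u=\log(1+(K-1)e^{2B_xB_W})$. *)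

theory Defs
  imports "HOL-Analysis.Analysis"
begin

text \<open>Data: index type 'n of size N (samples i), feature type 'd of size D,
  class type 'k of size K.  x :: 'n => real^'d, y :: 'n => 'k.
  Parameters: u :: real^'n, W :: real^'d^'k (column w_k = W$k);
  the norm on real^'d^'k is the Frobenius norm.\<close>

definition ncount :: "('n::finite \<Rightarrow> 'k::finite) \<Rightarrow> 'k \<Rightarrow> real" where
  "ncount y j = real (card {i. y i = j})"

definition betaw :: "('n::finite \<Rightarrow> 'k::finite) \<Rightarrow> 'k \<Rightarrow> real" where
  "betaw y j = real CARD('n) /
     (ncount y j + (real CARD('n) - ncount y j) / (real CARD('k) - 1))"

definition fik :: "('n::finite \<Rightarrow> real^'d::finite) \<Rightarrow> ('n \<Rightarrow> 'k::finite) \<Rightarrow> real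
    \<Rightarrow> 'n \<Rightarrow> 'k \<Rightarrow> (real^'n) \<times> (real^'d^'k) \<Rightarrow> real" where
  "fik x y mu i k p = (let u = fst p; W = snd p in
     real CARD('n) * (u$i + exp (- u$i)
        + (real CARD('k) - 1) * exp (x i \<bullet> (W$k - W$(y i)) - u$i))
     + mu / 2 * (betaw y (y i) * (norm (W$(y i)))\<^sup>2 + betaw y k * (norm (W$k))\<^sup>2))"

definition ftot :: "('n::finite \<Rightarrow> real^'d::finite) \<Rightarrow> ('n \<Rightarrow> 'k::finite) \<Rightarrow> real
    \<Rightarrow> (real^'n) \<times> (real^'d^'k) \<Rightarrow> real" where
  "ftot x y mu p = (\<Sum>i\<in>UNIV. (1 / real CARD('n)) *
       (\<Sum>k\<in>UNIV - {y i}. (1 / (real CARD('k) - 1)) * fik x y mu i k p))"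

definition BW :: "'n::finite itself \<Rightarrow> 'k::finite itself \<Rightarrow> real \<Rightarrow> real" where
  "BW _ _ mu = sqrt (2 / mu * real CARD('n) * ln (real CARD('k)))"

definition Bx :: "('n::finite \<Rightarrow> real^'d::finite) \<Rightarrow> real" where
  "Bx x = Max (range (\<lambda>i. norm (x i)))"

definition Bu :: "('n::finite \<Rightarrow> real^'d::finite) \<Rightarrow> 'k::finite itself \<Rightarrow> real \<Rightarrow> real" where
  "Bu x K mu = ln (1 + (real CARD('k) - 1) * exp (2 * Bx x * BW TYPE('n) K mu))"

definition Bf :: "('n::finite \<Rightarrow> real^'d::finite) \<Rightarrow> ('n \<Rightarrow> 'k::finite) \<Rightarrow> real \<Rightarrow> real" where
  "Bf x y mu = real CARD('n) * max 1 (exp (Bu x TYPE('k) mu) - 1)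
     + 2 * (real CARD('n) * exp (Bu x TYPE('k) mu) * Bx x
            + mu * Max (range (betaw y)) * BW TYPE('n) TYPE('k) mu)"

end

theory Submission
  imports Defs
begin

text \<open>Each \<open>f\<^sub>i\<^sub>k\<close> depends on \<open>u\<close> only through \<open>u\<^sub>i\<close> and on \<open>W\<close> only through
  the columns \<open>w\<^sub>k\<close> and \<open>w\<^sub>y\<^sub>i\<close>. With \<open>t = (K - 1) exp (x\<^sub>i \<bullet> (w\<^sub>k - w\<^sub>y\<^sub>i) - u\<^sub>i)\<close>
  its gradient therefore has the single \<open>u\<close>-entry \<open>N (1 - exp (-u\<^sub>i) - t)\<close> and the two
  columns \<open>\<plusminus>N t x\<^sub>i + \<mu> \<beta> w\<close>. Cauchy-Schwarz together with \<open>\<parallel>W\<parallel> \<le> B\<^sub>W\<close> and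
  \<open>u\<^sub>i \<ge> 0\<close> gives \<open>0 \<le> t \<le> (K - 1) exp (2 B\<^sub>x B\<^sub>W) = exp B\<^sub>u - 1\<close>, which bounds the three
  blocks by the three summands of \<open>B\<^sub>f\<close>. The gradient of \<open>f\<close> is a convex combination of
  these gradients, so the same bound holds for it.\<close>

lemma norm_axis: "norm (axis i (c::'a::real_inner)) = norm c"
  by (simp add: norm_eq_sqrt_inner inner_axis_axis)

lemma has_derivative_vec_nth [derivative_intros]:
  "(f has_derivative f') F \<Longrightarrow> ((\<lambda>x. f x $ i) has_derivative (\<lambda>h. f' h $ i)) F"
  by (rule bounded_linear.has_derivative[OF bounded_linear_vec_nth])

lemma abs_one_minus_exp_le_max:
  fixes v t c :: real
  assumes "0 \<le> v" "0 \<le> t" "t \<le> c"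
  shows "\<bar>1 - exp (- v) - t\<bar> \<le> max 1 c"
proof -
  have "0 < exp (- v)" "exp (- v) \<le> 1"
    using assms(1) by simp_all
  then show ?thesis
    using assms(2,3) max.cobounded1[of 1 c] max.cobounded2[of 1 c] unfolding abs_le_iff by linarith
qed

lemma has_gradient_convex_combination:
  fixes f :: "'a \<Rightarrow> 'b::real_inner \<Rightarrow> real"
  assumes "finite A" and w_nonneg: "\<And>a. a \<in> A \<Longrightarrow> 0 \<le> w a" and w_sum: "sum w A = 1"
    and grad: "\<And>a. a \<in> A \<Longrightarrow> \<exists>G. GDERIV (f a) p :> G \<and> norm G \<le> B"
  shows "\<exists>G. GDERIV (\<lambda>q. \<Sum>a\<in>A. w a * f a q) p :> G \<and> norm G \<le> B"
proof -
  obtain G where G: "\<And>a. a \<in> A \<Longrightarrow> GDERIV (f a) p :> G a \<and> norm (G a) \<le> B"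
    using grad by metis
  have "GDERIV (\<lambda>q. \<Sum>a\<in>A. w a * f a q) p :> (\<Sum>a\<in>A. w a *\<^sub>R G a)"
    unfolding gderiv_def
    by (rule has_derivative_eq_rhs, (rule has_derivative_sum has_derivative_mult_right)+)
      (use G in \<open>auto simp: gderiv_def inner_sum_right\<close>)
  moreover have "norm (\<Sum>a\<in>A. w a *\<^sub>R G a) \<le> B"
  proof -
    have "norm (\<Sum>a\<in>A. w a *\<^sub>R G a) \<le> (\<Sum>a\<in>A. w a * norm (G a))"
      by (rule order_trans[OF norm_sum]) (simp add: w_nonneg)
    also have "\<dots> \<le> (\<Sum>a\<in>A. w a * B)"
      by (intro sum_mono mult_left_mono) (simp_all add: G w_nonneg)
    also have "\<dots> = B"
      by (simp add: w_sum flip: sum_distrib_right)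
    finally show ?thesis .
  qed
  ultimately show ?thesis by blast
qed

definition fik_coeff :: "('n::finite \<Rightarrow> real^'d::finite) \<Rightarrow> ('n \<Rightarrow> 'k::finite) \<Rightarrow> 'n \<Rightarrow> 'k
    \<Rightarrow> real^'n \<Rightarrow> real^'d^'k \<Rightarrow> real" where
  "fik_coeff x y i k u W = (real CARD('k) - 1) * exp (x i \<bullet> (W$k - W$(y i)) - u$i)"

definition fik_grad :: "('n::finite \<Rightarrow> real^'d::finite) \<Rightarrow> ('n \<Rightarrow> 'k::finite) \<Rightarrow> real \<Rightarrow> 'n \<Rightarrow> 'k
    \<Rightarrow> real^'n \<Rightarrow> real^'d^'k \<Rightarrow> (real^'n) \<times> (real^'d^'k)" where
  "fik_grad x y mu i k u W =
    (axis i (real CARD('n) * (1 - exp (- u$i) - fik_coeff x y i k u W)),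
     axis k ((real CARD('n) * fik_coeff x y i k u W) *\<^sub>R x i + (mu * betaw y k) *\<^sub>R W$k)
     + axis (y i) ((- real CARD('n) * fik_coeff x y i k u W) *\<^sub>R x i
                   + (mu * betaw y (y i)) *\<^sub>R W$(y i)))"

lemma has_gradient_fik:
  fixes x :: "'n::finite \<Rightarrow> real^'d::finite" and y :: "'n \<Rightarrow> 'k::finite"
  shows "GDERIV (fik x y mu i k) (u, W) :> fik_grad x y mu i k u W"
proof -
  have fik_inner: "fik x y mu i k = (\<lambda>p. real CARD('n) * (fst p$i + exp (- fst p$i)
        + (real CARD('k) - 1) * exp (x i \<bullet> (snd p$k - snd p$(y i)) - fst p$i))
     + mu / 2 * (betaw y (y i) * (snd p$(y i) \<bullet> snd p$(y i)) + betaw y k * (snd p$k \<bullet> snd p$k)))"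
    by (auto simp: fik_def Let_def power2_norm_eq_inner fun_eq_iff)
  show ?thesis
    unfolding gderiv_def fik_inner
    by (rule has_derivative_eq_rhs, (rule derivative_eq_intros refl)+)
      (auto simp: fun_eq_iff fik_grad_def fik_coeff_def inner_axis algebra_simps inner_commute)
qed

lemma has_gradient_ftot_le:
  fixes x :: "'n::finite \<Rightarrow> real^'d::finite" and y :: "'n \<Rightarrow> 'k::finite"
  assumes "CARD('k) \<ge> 2"
    and grad_fik: "\<And>i k. k \<noteq> y i \<Longrightarrow> \<exists>G. GDERIV (fik x y mu i k) p :> G \<and> norm G \<le> B"
  shows "\<exists>G. GDERIV (ftot x y mu) p :> G \<and> norm G \<le> B"
proof -
  have class_average: "\<exists>G. GDERIV (\<lambda>q. \<Sum>k\<in>UNIV - {y i}.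
      1 / (real CARD('k) - 1) * fik x y mu i k q) p :> G \<and> norm G \<le> B" for i
    by (rule has_gradient_convex_combination)
      (use assms in \<open>auto simp: card_Diff_singleton of_nat_diff\<close>)
  have "\<exists>G. GDERIV (\<lambda>q. \<Sum>i\<in>UNIV. 1 / real CARD('n) *
      (\<Sum>k\<in>UNIV - {y i}. 1 / (real CARD('k) - 1) * fik x y mu i k q)) p :> G \<and> norm G \<le> B"
    by (rule has_gradient_convex_combination[OF _ _ _ class_average]) auto
  then show ?thesis
    by (simp add: ftot_def[abs_def])
qed

lemma norm_le_Bx: "norm (x i) \<le> Bx x"
  unfolding Bx_def by (rule Max_ge) auto

lemma betaw_nonneg:
  fixes y :: "'n::finite \<Rightarrow> 'k::finite"
  shows "0 \<le> betaw y j"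
proof -
  have "card {i. y i = j} \<le> CARD('n)"
    by (rule card_mono) auto
  then have "ncount y j \<le> real CARD('n)"
    unfolding ncount_def by simp
  then show ?thesis
    unfolding betaw_def by (simp add: ncount_def)
qed

lemma BW_nonneg:
  assumes "0 < mu"
  shows "0 \<le> BW TYPE('n::finite) TYPE('k::finite) mu"
  using assms by (simp add: BW_def)

lemma exp_Bu:
  fixes x :: "'n::finite \<Rightarrow> real^'d::finite"
  shows "exp (Bu x TYPE('k::finite) mu)
    = 1 + (real CARD('k) - 1) * exp (2 * Bx x * BW TYPE('n) TYPE('k) mu)"
  unfolding Bu_def by (simp add: add_pos_nonneg)

lemma fik_coeff_nonneg: "0 \<le> fik_coeff x y i k u W"
  by (simp add: fik_coeff_def)

lemma fik_coeff_le:
  fixes x :: "'n::finite \<Rightarrow> real^'d::finite" and y :: "'n \<Rightarrow> 'k::finite"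
  assumes W_le: "norm W \<le> BW TYPE('n) TYPE('k) mu" and u_nonneg: "0 \<le> u$i"
  shows "fik_coeff x y i k u W \<le> exp (Bu x TYPE('k) mu) - 1"
proof -
  have col_le: "norm (W$j) \<le> BW TYPE('n) TYPE('k) mu" for j
    using Finite_Cartesian_Product.norm_nth_le W_le by (rule order_trans)
  have "x i \<bullet> (W$k - W$(y i)) \<le> norm (x i) * norm (W$k - W$(y i))"
    by (rule order_trans[OF _ Cauchy_Schwarz_ineq2]) simp
  also have "\<dots> \<le> Bx x * (2 * BW TYPE('n) TYPE('k) mu)"
    using order_trans[OF norm_ge_zero norm_le_Bx[of x i]] norm_triangle_ineq4[of "W$k" "W$(y i)"]
      col_le[of k] col_le[of "y i"]
    by (intro mult_mono norm_le_Bx) auto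
  finally have "exp (x i \<bullet> (W$k - W$(y i)) - u$i) \<le> exp (2 * Bx x * BW TYPE('n) TYPE('k) mu)"
    using u_nonneg by simp
  then show ?thesis
    unfolding fik_coeff_def exp_Bu by (simp add: mult_left_mono)
qed

lemma norm_fik_grad_le:
  fixes x :: "'n::finite \<Rightarrow> real^'d::finite" and y :: "'n \<Rightarrow> 'k::finite"
  assumes mu_nonneg: "0 \<le> mu" and W_le: "norm W \<le> BW TYPE('n) TYPE('k) mu"
    and u_nonneg: "0 \<le> u$i"
  shows "norm (fik_grad x y mu i k u W) \<le> Bf x y mu"
proof -
  define N where "N = real CARD('n)"
  define E where "E = exp (Bu x TYPE('k) mu)"
  define t where "t = fik_coeff x y i k u W"
  have t_nonneg: "0 \<le> t" and t_le: "t \<le> E - 1"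
    unfolding t_def E_def using fik_coeff_nonneg fik_coeff_le[OF W_le u_nonneg] by auto
  have beta_le_Max: "betaw y j \<le> Max (range (betaw y))" for j
    by (rule Max_ge) auto
  have u_part: "norm (N * (1 - exp (- u$i) - t)) \<le> N * max 1 (E - 1)"
    using abs_one_minus_exp_le_max[OF u_nonneg t_nonneg t_le]
    by (simp add: N_def abs_mult)
  have W_part: "norm (a *\<^sub>R x i + (mu * betaw y j) *\<^sub>R W$j)
      \<le> N * E * Bx x + mu * Max (range (betaw y)) * BW TYPE('n) TYPE('k) mu"
    if "\<bar>a\<bar> \<le> N * E" for a j
  proof -
    have "norm (a *\<^sub>R x i + (mu * betaw y j) *\<^sub>R W$j) \<le> \<bar>a\<bar> * norm (x i) + mu * betaw y j * norm (W$j)"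
      using norm_triangle_ineq[of "a *\<^sub>R x i" "(mu * betaw y j) *\<^sub>R W$j"] mu_nonneg betaw_nonneg[of y j]
      by simp
    also have "\<dots> \<le> N * E * Bx x + mu * Max (range (betaw y)) * BW TYPE('n) TYPE('k) mu"
    proof (intro add_mono mult_mono mult_left_mono)
      show "norm (W$j) \<le> BW TYPE('n) TYPE('k) mu"
        using Finite_Cartesian_Product.norm_nth_le W_le by (rule order_trans)
    qed (use that norm_le_Bx[of x i] mu_nonneg betaw_nonneg[of y j]
          order_trans[OF betaw_nonneg beta_le_Max] in auto)
    finally show ?thesis .
  qed
  have "N * t \<le> N * E"
    using t_le by (simp add: N_def)
  then have coeff_le: "\<bar>N * t\<bar> \<le> N * E" "\<bar>- N * t\<bar> \<le> N * E"
    using t_nonneg by (simp_all add: N_def)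
  have "norm (fik_grad x y mu i k u W)
      \<le> norm (N * (1 - exp (- u$i) - t))
        + (norm ((N * t) *\<^sub>R x i + (mu * betaw y k) *\<^sub>R W$k)
           + norm ((- N * t) *\<^sub>R x i + (mu * betaw y (y i)) *\<^sub>R W$(y i)))"
    unfolding fik_grad_def N_def t_def
    by (rule order_trans[OF norm_Pair_le add_mono])
      (simp_all add: norm_axis order_trans[OF norm_triangle_ineq])
  also have "\<dots> \<le> Bf x y mu"
    unfolding Bf_def N_def[symmetric] E_def[symmetric] mult_2
    by (intro add_mono u_part W_part coeff_le)
  finally show ?thesis .
qed

theorem lemma4:
  fixes x :: "'n::finite \<Rightarrow> real^'d::finite"
    and y :: "'n \<Rightarrow> 'k::finite"
    and mu :: real
    and u :: "real^'n"
    and W :: "real^'d^'k"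
  assumes K2: "CARD('k) \<ge> 2"
    and mu_pos: "mu > 0"
    and W_bd: "(norm W)\<^sup>2 \<le> (BW TYPE('n) TYPE('k) mu)\<^sup>2"
    and u_bd: "\<forall>i. 0 \<le> u$i \<and> u$i \<le> Bu x TYPE('k) mu"
  shows "(\<exists>G. (GDERIV (ftot x y mu) (u, W) :> G) \<and> norm G \<le> Bf x y mu)
    \<and> (\<forall>i k. k \<noteq> y i \<longrightarrow>
         (\<exists>G. (GDERIV (fik x y mu i k) (u, W) :> G) \<and> norm G \<le> Bf x y mu))"
proof -
  have W_le: "norm W \<le> BW TYPE('n) TYPE('k) mu"
    using W_bd BW_nonneg[OF mu_pos] by (rule power2_le_imp_le)
  have fik_bound: "\<exists>G. GDERIV (fik x y mu i k) (u, W) :> G \<and> norm G \<le> Bf x y mu" for i k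
    using has_gradient_fik norm_fik_grad_le[OF less_imp_le[OF mu_pos] W_le] u_bd by blast
  then show ?thesis
    using has_gradient_ftot_le[OF K2] by blast
qed

end
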